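(* Let $d,T$, $K_t=\prod_jK_t^j$, $\Omega$, $\mathcal E_t$ and $\mathcal D_t,\mathcal D,V,V_t,U,U_t,S^U,S^{U_t}$ be as in the context. Then: 1. $\mathcal D_0,\dots,\mathcal D_T$ (as functionals on $\mathrm{ca}^1(\Omega)$) and $\mathcal D$ are $\sigma(\mathrm{ca}^1(\Omega),\mathcal E)$-lower semicontinuous. 2. If in addition $\mathrm{dom}(\mathcal D_t)\subseteq\mathrm{Prob}^1(K_t)$ for every $t$, then for every $\varphi=(\varphi_0,\dots,\varphi_T)\in\mathcal E$: $U(\varphi)=\sum_{t=0}^TU_t(\varphi_t)=\sum_{t=0}^T-V_t(-\varphi_t)$ and $S^U(\varphi)=\sum_{t=0}^TS^{U_t}(\varphi_t)$.
   Context: $d\ge1$, $T\ge1$, $K_t^j\subseteq\mathbb R$ closed, $K_t=\prod_{j}K_t^j$, $\Omega=K_0\times\dots\times K_T$. $C_t$: continuous $\phi$ on $K_t$ with $\sup|\phi(x_t)|/(1+\sum_j|x_t^j|)<\infty$; $C_{0:T}$: continuous $\phi$ on $\Omega$ with $\sup|\phi(x)|/(1+\sum_{t,j}|x_t^j|)<\infty$. $\mathcal E_t\subseteq C_t$ vector subspaces with $\mathcal E_t+\mathbb R=\mathcal E_t$, $\mathcal E=\mathcal E_0\times\dots\times\mathcal E_T$. $\mathrm{ca}^1(\Omega)$ (resp. $\mathrm{ca}^1(K_t)$) is the set of finite signed Borel measures $\gamma$ on $\Omega$ (resp. $K_t$) such that every element of $C_{0:T}$ (resp. $C_t$) is $|\gamma|$-integrable;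 $\mathrm{Prob}^1$ denotes the probability measures among them; $\gamma_t$ is the marginal of $\gamma$ on $K_t$. $\sigma(\mathrm{ca}^1(\Omega),\mathcal E)$ is the weakest topology making $\gamma\mapsto\int\varphi_t\,d\gamma$ continuous for all $\varphi_t\in\mathcal E_t$, $t=0,\dots,T$; similarly $\sigma(\mathrm{ca}^1(K_t),\mathcal E_t)$. For each $t$, $\mathcal D_t:\mathrm{ca}^1(K_t)\to(-\infty,+\infty]$ is proper, convex and $\sigma(\mathrm{ca}^1(K_t),\mathcal E_t)$-lower semicontinuous; for $\gamma\in\mathrm{ca}^1(\Omega)$ set $\mathcal D_t(\gamma):=\mathcal D_t(\gamma_t)$ and $\mathcal D(\gamma)=\sum_t\mathcal D_t(\gamma_t)$. $V(\varphi)=\sup_{\gamma\in\mathrm{ca}^1(\Omega)}(\int\sum_t\varphi_t\,d\gamma-\mathcal D(\gamma))$, $V_t(\varphi_t)=\sup_{\gamma\in\mathrm{ca}^1(K_t)}(\int\varphi_t\,d\gamma-\mathcal D_t(\gamma))$, $U(\varphi)=-V(-\varphi)$, $U_t(\varphi_t)=-V_t(-\varphi_t)$, $S^U(\varphi)=\sup_{\beta\in\mathbb R^{T+1}}(U(\varphi+\beta)-\sum_t\beta_t)$, $S^{U_t}(\varphi_t)=\sup_{\alpha\in\mathbb R}(U_t(\varphi_t+\alpha)-\alpha)$. Convention $+\infty-\infty=-\infty$. *)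

theory Defs
  imports "HOL-Analysis.Analysis" "HOL-Probability.Probability"
begin

text \<open>A finite signed measure on the measurable space M is represented by its set function
  'a set => real (value 0 on non-measurable sets).  It is always the difference of two finite
  measures (Jordan decomposition).  For a set F of test functions, ca1 M F is the set of finite
  signed measures gamma such that every element of F is |gamma|-integrable; equivalently gamma
  admits a decomposition gamma = mu - nu into finite measures for which every element of F is
  mu- and nu-integrable (take the Jordan decomposition; conversely gamma+ <= mu, gamma- <= nu).\<close>

definition signed_decomp :: "'a measure \<Rightarrow> ('a set \<Rightarrow> real) \<Rightarrow> 'a measure \<Rightarrow> 'a measure \<Rightarrow> bool" where
  "signed_decomp M \<gamma> \<mu> \<nu> \<longleftrightarrow> sets \<mu> = sets M \<and> sets \<nu> = sets M \<and>
     finite_measure \<mu> \<and> finite_measure \<nu> \<and> \<gamma> = (\<lambda>A. measure \<mu> A - measure \<nu> A)"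

definition ca1 :: "'a measure \<Rightarrow> ('a \<Rightarrow> real) set \<Rightarrow> ('a set \<Rightarrow> real) set" where
  "ca1 M F = {\<gamma>. \<exists>\<mu> \<nu>. signed_decomp M \<gamma> \<mu> \<nu> \<and> (\<forall>\<phi>\<in>F. integrable \<mu> \<phi> \<and> integrable \<nu> \<phi>)}"

text \<open>Integral of phi with respect to the signed measure gamma (well defined whenever phi is
  |gamma|-integrable: it does not depend on the decomposition).\<close>
definition sint :: "'a measure \<Rightarrow> ('a set \<Rightarrow> real) \<Rightarrow> ('a \<Rightarrow> real) \<Rightarrow> real" where
  "sint M \<gamma> \<phi> = (THE r. \<exists>\<mu> \<nu>. signed_decomp M \<gamma> \<mu> \<nu> \<and> integrable \<mu> \<phi> \<and> integrable \<nu> \<phi> \<and>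
                         r = integral\<^sup>L \<mu> \<phi> - integral\<^sup>L \<nu> \<phi>)"

definition is_prob :: "'a measure \<Rightarrow> ('a set \<Rightarrow> real) \<Rightarrow> bool" where
  "is_prob M \<gamma> \<longleftrightarrow> (\<forall>A. 0 \<le> \<gamma> A) \<and> \<gamma> (space M) = 1"

text \<open>Time index: finite type 't with CARD('t) = T+1; coordinates: finite type 'd.
  A point of Omega is x :: real^'d^'t with x$t \<in> K_t, and K_t = prod_j K_t^j.\<close>

definition Kt :: "('t \<Rightarrow> 'd::finite \<Rightarrow> real set) \<Rightarrow> 't \<Rightarrow> (real^'d) set" where
  "Kt KK t = {v. \<forall>j. v$j \<in> KK t j}"

definition Omega :: "('t::finite \<Rightarrow> 'd::finite \<Rightarrow> real set) \<Rightarrow> (real^'d^'t) set" where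
  "Omega KK = {x. \<forall>t. x$t \<in> Kt KK t}"

definition MK :: "('t \<Rightarrow> 'd::finite \<Rightarrow> real set) \<Rightarrow> 't \<Rightarrow> (real^'d) measure" where
  "MK KK t = restrict_space borel (Kt KK t)"

definition MOm :: "('t::finite \<Rightarrow> 'd::finite \<Rightarrow> real set) \<Rightarrow> (real^'d^'t) measure" where
  "MOm KK = restrict_space borel (Omega KK)"

definition Ct :: "('t \<Rightarrow> 'd::finite \<Rightarrow> real set) \<Rightarrow> 't \<Rightarrow> (real^'d \<Rightarrow> real) set" where
  "Ct KK t = {\<phi>. continuous_on (Kt KK t) \<phi> \<and>
      (\<exists>c. \<forall>v\<in>Kt KK t. \<bar>\<phi> v\<bar> \<le> c * (1 + (\<Sum>j\<in>UNIV. \<bar>v$j\<bar>)))}"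

definition C0T :: "('t::finite \<Rightarrow> 'd::finite \<Rightarrow> real set) \<Rightarrow> (real^'d^'t \<Rightarrow> real) set" where
  "C0T KK = {\<phi>. continuous_on (Omega KK) \<phi> \<and>
      (\<exists>c. \<forall>x\<in>Omega KK. \<bar>\<phi> x\<bar> \<le> c * (1 + (\<Sum>t\<in>UNIV. \<Sum>j\<in>UNIV. \<bar>x$t$j\<bar>)))}"

abbreviation caK where "caK KK t \<equiv> ca1 (MK KK t) (Ct KK t)"
abbreviation caOm where "caOm KK \<equiv> ca1 (MOm KK) (C0T KK)"

definition marg :: "('t::finite \<Rightarrow> 'd::finite \<Rightarrow> real set) \<Rightarrow> 't \<Rightarrow> ((real^'d^'t) set \<Rightarrow> real)
                     \<Rightarrow> (real^'d) set \<Rightarrow> real" where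
  "marg KK t \<gamma> = (\<lambda>B. if B \<in> sets (MK KK t) then \<gamma> ((\<lambda>x. x$t) -` B \<inter> Omega KK) else 0)"

definition weak_top :: "'a measure \<Rightarrow> ('a set \<Rightarrow> real) set \<Rightarrow> ('a \<Rightarrow> real) set
                        \<Rightarrow> ('a set \<Rightarrow> real) topology" where
  "weak_top M C G = topology_generated_by
      {{\<gamma>\<in>C. sint M \<gamma> \<phi> \<in> U} | \<phi> U. \<phi> \<in> G \<and> open U}"

definition lsc_on :: "'b topology \<Rightarrow> ('b \<Rightarrow> ereal) \<Rightarrow> bool" where
  "lsc_on X f \<longleftrightarrow> (\<forall>a. closedin X {x \<in> topspace X. f x \<le> a})"

text \<open>The test functions generating sigma(ca1(Omega), E): x \<mapsto> phi_t(x_t), phi_t \<in> E_t.\<close>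
definition testE :: "('t \<Rightarrow> (real^'d \<Rightarrow> real) set) \<Rightarrow> (real^'d^'t \<Rightarrow> real) set" where
  "testE E = {(\<lambda>x. \<phi> (x$t)) | t \<phi>. \<phi> \<in> E t}"

definition proper_convex_on :: "('b set \<Rightarrow> real) set \<Rightarrow> (('b set \<Rightarrow> real) \<Rightarrow> ereal) \<Rightarrow> bool" where
  "proper_convex_on C D \<longleftrightarrow> (\<forall>\<gamma>\<in>C. D \<gamma> \<noteq> -\<infinity>) \<and> (\<exists>\<gamma>\<in>C. D \<gamma> < \<infinity>) \<and>
     (\<forall>\<gamma>1\<in>C. \<forall>\<gamma>2\<in>C. \<forall>l::real. 0 \<le> l \<and> l \<le> 1 \<longrightarrow>
        D (\<lambda>A. l * \<gamma>1 A + (1 - l) * \<gamma>2 A) \<le> ereal l * D \<gamma>1 + ereal (1 - l) * D \<gamma>2)"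

definition Dtot :: "('t::finite \<Rightarrow> 'd::finite \<Rightarrow> real set) \<Rightarrow> ('t \<Rightarrow> ((real^'d) set \<Rightarrow> real) \<Rightarrow> ereal)
                     \<Rightarrow> ((real^'d^'t) set \<Rightarrow> real) \<Rightarrow> ereal" where
  "Dtot KK D \<gamma> = (\<Sum>t\<in>UNIV. D t (marg KK t \<gamma>))"

definition VV :: "('t::finite \<Rightarrow> 'd::finite \<Rightarrow> real set) \<Rightarrow> ('t \<Rightarrow> ((real^'d) set \<Rightarrow> real) \<Rightarrow> ereal)
                   \<Rightarrow> ('t \<Rightarrow> real^'d \<Rightarrow> real) \<Rightarrow> ereal" where
  "VV KK D \<phi> = (SUP \<gamma>\<in>caOm KK. ereal (sint (MOm KK) \<gamma> (\<lambda>x. \<Sum>t\<in>UNIV. \<phi> t (x$t))) - Dtot KK D \<gamma>)"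

definition Vt :: "('t \<Rightarrow> 'd::finite \<Rightarrow> real set) \<Rightarrow> ('t \<Rightarrow> ((real^'d) set \<Rightarrow> real) \<Rightarrow> ereal)
                   \<Rightarrow> 't \<Rightarrow> (real^'d \<Rightarrow> real) \<Rightarrow> ereal" where
  "Vt KK D t \<psi> = (SUP \<gamma>\<in>caK KK t. ereal (sint (MK KK t) \<gamma> \<psi>) - D t \<gamma>)"

definition UU where "UU KK D \<phi> = - VV KK D (\<lambda>t v. - \<phi> t v)"

definition Ut where "Ut KK D t \<psi> = - Vt KK D t (\<lambda>v. - \<psi> v)"

definition SU :: "('t::finite \<Rightarrow> 'd::finite \<Rightarrow> real set) \<Rightarrow> ('t \<Rightarrow> ((real^'d) set \<Rightarrow> real) \<Rightarrow> ereal)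
                   \<Rightarrow> ('t \<Rightarrow> real^'d \<Rightarrow> real) \<Rightarrow> ereal" where
  "SU KK D \<phi> = (SUP \<beta>\<in>(UNIV::(real^'t) set).
                  UU KK D (\<lambda>t v. \<phi> t v + \<beta>$t) - ereal (\<Sum>t\<in>UNIV. \<beta>$t))"

definition SUt :: "('t \<Rightarrow> 'd::finite \<Rightarrow> real set) \<Rightarrow> ('t \<Rightarrow> ((real^'d) set \<Rightarrow> real) \<Rightarrow> ereal)
                   \<Rightarrow> 't \<Rightarrow> (real^'d \<Rightarrow> real) \<Rightarrow> ereal" where
  "SUt KK D t \<psi> = (SUP \<alpha>\<in>(UNIV::real set). Ut KK D t (\<lambda>v. \<psi> v + \<alpha>) - ereal \<alpha>)"

end

theory Submission
  imports Defs
begin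

(* The marginal map \<gamma> \<mapsto> \<gamma>\<^sub>t is continuous from \<sigma>(ca\<^sup>1(\<Omega>), \<E>) to \<sigma>(ca\<^sup>1(K\<^sub>t), \<E>\<^sub>t), since
   \<integral>\<phi>\<^sub>t d\<gamma>\<^sub>t = \<integral>\<phi>\<^sub>t(x\<^sub>t) d\<gamma>(x). Hence each \<D>\<^sub>t(\<gamma>\<^sub>t) is lower semicontinuous, and so is their
   finite sum \<D>, none of the summands taking the value -\<infinity>.
   For the second part, \<integral>\<Sum>\<^sub>t \<phi>\<^sub>t(x\<^sub>t) d\<gamma> - \<D>(\<gamma>) = \<Sum>\<^sub>t (\<integral>\<phi>\<^sub>t d\<gamma>\<^sub>t - \<D>\<^sub>t(\<gamma>\<^sub>t)), which gives
   V(\<phi>) \<le> \<Sum>\<^sub>t V\<^sub>t(\<phi>\<^sub>t). Conversely, measures that are nearly optimal for the V\<^sub>t have finite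
   penalty, so they are probability measures, and their product measure on \<Omega> has exactly these
   marginals; this gives the reverse inequality. Finally, since every measure of finite penalty
   has mass one, U\<^sub>t(\<phi>\<^sub>t + \<alpha>) = U\<^sub>t(\<phi>\<^sub>t) + \<alpha>, so the suprema defining S^U and S^(U_t) are
   attained at every shift. *)

section \<open>Finite sums of extended reals\<close>

lemma ereal_sum_neq_MInfty:
  fixes f :: "'i \<Rightarrow> ereal"
  shows "(\<And>i. i \<in> I \<Longrightarrow> f i \<noteq> -\<infinity>) \<Longrightarrow> (\<Sum>i\<in>I. f i) \<noteq> -\<infinity>"
  by (induction I rule: infinite_finite_induct) auto

lemma ereal_less_add_split:
  fixes x y a :: ereal
  assumes "x \<noteq> -\<infinity>" "y \<noteq> -\<infinity>" "a < x + y"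
  shows "\<exists>r. ereal r < x \<and> a - ereal r < y"
proof (cases "a = -\<infinity> \<or> y = \<infinity>")
  case True
  obtain r where "ereal r < x"
    using assms(1) ereal_dense2[of "-\<infinity>" x] by auto
  moreover have "a \<noteq> \<infinity>"
    using assms(3) by auto
  ultimately show ?thesis
    using True assms(2) by (intro exI[of _ r]) (cases a; auto)
next
  case False
  then obtain z w where "a = ereal z" "y = ereal w"
    using assms by (cases a; cases y) auto
  then have "ereal (z - w) < x"
    using assms by (cases x) auto
  then obtain r where "ereal (z - w) < ereal r" "ereal r < x"
    using ereal_dense2 by blast
  then show ?thesis
    using \<open>a = ereal z\<close> \<open>y = ereal w\<close> by (intro exI[of _ r]) auto
qed

lemma ereal_less_sum_split:
  fixes S :: "'i \<Rightarrow> ereal"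
  assumes "finite I" "\<And>i. i \<in> I \<Longrightarrow> S i \<noteq> -\<infinity>" "a < (\<Sum>i\<in>I. S i)"
  shows "\<exists>r. (\<forall>i\<in>I. ereal (r i) < S i) \<and> a < (\<Sum>i\<in>I. ereal (r i))"
  using assms
proof (induction I arbitrary: a rule: finite_induct)
  case empty
  then show ?case by (simp add: zero_ereal_def)
next
  case (insert s I)
  have "(\<Sum>i\<in>I. S i) \<noteq> -\<infinity>"
    using insert.prems(1) by (intro ereal_sum_neq_MInfty) auto
  moreover have "a < S s + (\<Sum>i\<in>I. S i)"
    using insert.prems(2) insert.hyps by simp
  ultimately obtain r0 where r0: "ereal r0 < S s" "a - ereal r0 < (\<Sum>i\<in>I. S i)"
    using ereal_less_add_split[of "S s" "\<Sum>i\<in>I. S i" a] insert.prems(1) by blast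
  then obtain r where r: "\<forall>i\<in>I. ereal (r i) < S i" "a - ereal r0 < (\<Sum>i\<in>I. ereal (r i))"
    using insert.IH[of "a - ereal r0"] insert.prems(1) by auto
  have "(\<Sum>i\<in>I. ereal ((r(s := r0)) i)) = (\<Sum>i\<in>I. ereal (r i))"
    using insert.hyps by (intro sum.cong) auto
  moreover have "a < ereal r0 + (\<Sum>i\<in>I. ereal (r i))"
    using r(2) by (cases a) (auto simp: ereal_minus_less_iff)
  ultimately show ?case
    using insert.hyps r0 r by (intro exI[of _ "r(s := r0)"]) auto
qed

lemma ereal_minus_sum:
  fixes b :: "'i \<Rightarrow> ereal"
  assumes "\<And>i. i \<in> I \<Longrightarrow> b i \<noteq> -\<infinity>"
  shows "ereal (\<Sum>i\<in>I. a i) - (\<Sum>i\<in>I. b i) = (\<Sum>i\<in>I. ereal (a i) - b i)"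
  using assms
proof (induction I rule: infinite_finite_induct)
  case (insert s I)
  have "(\<Sum>i\<in>I. b i) \<noteq> -\<infinity>" "b s \<noteq> -\<infinity>"
    using insert.prems by (auto intro!: ereal_sum_neq_MInfty)
  then have "ereal (a s + (\<Sum>i\<in>I. a i)) - (b s + (\<Sum>i\<in>I. b i))
      = (ereal (a s) - b s) + (ereal (\<Sum>i\<in>I. a i) - (\<Sum>i\<in>I. b i))"
    by (cases "b s"; cases "\<Sum>i\<in>I. b i") auto
  then show ?case
    using insert by simp
qed simp_all

lemma ereal_uminus_sum:
  fixes f :: "'i \<Rightarrow> ereal"
  assumes "\<And>i. i \<in> I \<Longrightarrow> f i \<noteq> -\<infinity>"
  shows "- (\<Sum>i\<in>I. f i) = (\<Sum>i\<in>I. - f i)"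
  using ereal_minus_sum[of I f "\<lambda>_. 0", OF assms] by (simp add: zero_ereal_def[symmetric])

section \<open>Integrals with respect to signed measures\<close>

(* Both sides integrate f against the same measure, \<mu>1 + \<nu>2 = \<mu>2 + \<nu>1. *)
lemma nn_integral_add_eq_of_measure_diff_eq:
  fixes \<mu>1 \<mu>2 \<nu>1 \<nu>2 :: "'a measure"
  assumes sets: "sets \<nu>1 = sets \<mu>1" "sets \<mu>2 = sets \<mu>1" "sets \<nu>2 = sets \<mu>1"
    and fin: "finite_measure \<mu>1" "finite_measure \<mu>2" "finite_measure \<nu>1" "finite_measure \<nu>2"
    and eq: "\<And>A. A \<in> sets \<mu>1 \<Longrightarrow> measure \<mu>1 A - measure \<nu>1 A = measure \<mu>2 A - measure \<nu>2 A"
    and f: "f \<in> borel_measurable \<mu>1"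
  shows "(\<integral>\<^sup>+x. f x \<partial>\<mu>1) + (\<integral>\<^sup>+x. f x \<partial>\<nu>2) = (\<integral>\<^sup>+x. f x \<partial>\<mu>2) + (\<integral>\<^sup>+x. f x \<partial>\<nu>1)"
  using f
proof (induction rule: borel_measurable_induct)
  case (cong f g)
  have "space N = space \<mu>1 \<Longrightarrow> (\<integral>\<^sup>+x. f x \<partial>N) = (\<integral>\<^sup>+x. g x \<partial>N)" for N
    by (rule nn_integral_cong) (use cong in auto)
  moreover have "space \<nu>1 = space \<mu>1" "space \<mu>2 = space \<mu>1" "space \<nu>2 = space \<mu>1"
    using sets sets_eq_imp_space_eq by blast+
  ultimately show ?case
    using cong by simp
next
  case (set A)
  have "measure \<mu>1 A + measure \<nu>2 A = measure \<mu>2 A + measure \<nu>1 A"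
    using eq[OF set] by simp
  then have "emeasure \<mu>1 A + emeasure \<nu>2 A = emeasure \<mu>2 A + emeasure \<nu>1 A"
    using fin by (simp add: finite_measure.emeasure_eq_measure ennreal_plus[symmetric] del: ennreal_plus)
  then show ?case
    using set sets by simp
next
  case (mult u c)
  have "sets N = sets \<mu>1 \<Longrightarrow> (\<integral>\<^sup>+x. c * u x \<partial>N) = c * (\<integral>\<^sup>+x. u x \<partial>N)" for N
    using mult.hyps measurable_cong_sets[of N \<mu>1 borel borel] by (simp add: nn_integral_cmult)
  then show ?case
    using mult.IH sets by (metis distrib_left)
next
  case (add u v)
  have "sets N = sets \<mu>1 \<Longrightarrow> (\<integral>\<^sup>+x. v x + u x \<partial>N) = (\<integral>\<^sup>+x. v x \<partial>N) + (\<integral>\<^sup>+x. u x \<partial>N)" for N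
    using add.hyps measurable_cong_sets[of N \<mu>1 borel borel] by (simp add: nn_integral_add)
  then show ?case
    using add.IH sets by (simp add: ac_simps)
next
  case (seq U)
  have integral_SUP: "(\<integral>\<^sup>+x. (SUP i. U i) x \<partial>N) = (SUP i. \<integral>\<^sup>+x. U i x \<partial>N)" if "sets N = sets \<mu>1" for N
  proof -
    have "U i \<in> borel_measurable N" for i
      using seq.hyps(1) measurable_cong_sets[OF that, of borel borel] by blast
    then show ?thesis
      using nn_integral_monotone_convergence_SUP[of U N] seq.hyps(3) by (simp add: image_comp)
  qed
  have inc: "incseq (\<lambda>i. \<integral>\<^sup>+x. U i x \<partial>N)" for N
    using \<open>incseq U\<close> by (auto simp: incseq_def le_fun_def intro!: nn_integral_mono)
  have "(SUP i. \<integral>\<^sup>+x. U i x \<partial>\<mu>1) + (SUP i. \<integral>\<^sup>+x. U i x \<partial>\<nu>2)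
      = (SUP i. (\<integral>\<^sup>+x. U i x \<partial>\<mu>1) + (\<integral>\<^sup>+x. U i x \<partial>\<nu>2))"
    using inc by (simp add: ennreal_SUP_add)
  also have "\<dots> = (SUP i. (\<integral>\<^sup>+x. U i x \<partial>\<mu>2) + (\<integral>\<^sup>+x. U i x \<partial>\<nu>1))"
    using seq.IH by simp
  also have "\<dots> = (SUP i. \<integral>\<^sup>+x. U i x \<partial>\<mu>2) + (SUP i. \<integral>\<^sup>+x. U i x \<partial>\<nu>1)"
    using inc by (simp add: ennreal_SUP_add)
  finally show ?case
    using integral_SUP sets by simp
qed

lemma integral_diff_eq_of_measure_diff_eq:
  fixes \<mu>1 \<mu>2 \<nu>1 \<nu>2 :: "'a measure" and f :: "'a \<Rightarrow> real"
  assumes sets: "sets \<nu>1 = sets \<mu>1" "sets \<mu>2 = sets \<mu>1" "sets \<nu>2 = sets \<mu>1"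
    and fin: "finite_measure \<mu>1" "finite_measure \<mu>2" "finite_measure \<nu>1" "finite_measure \<nu>2"
    and eq: "\<And>A. A \<in> sets \<mu>1 \<Longrightarrow> measure \<mu>1 A - measure \<nu>1 A = measure \<mu>2 A - measure \<nu>2 A"
    and int: "integrable \<mu>1 f" "integrable \<mu>2 f" "integrable \<nu>1 f" "integrable \<nu>2 f"
  shows "integral\<^sup>L \<mu>1 f - integral\<^sup>L \<nu>1 f = integral\<^sup>L \<mu>2 f - integral\<^sup>L \<nu>2 f"
proof -
  have parts: "enn2real (\<integral>\<^sup>+x. ennreal (g x) \<partial>\<mu>1) + enn2real (\<integral>\<^sup>+x. ennreal (g x) \<partial>\<nu>2)
      = enn2real (\<integral>\<^sup>+x. ennreal (g x) \<partial>\<mu>2) + enn2real (\<integral>\<^sup>+x. ennreal (g x) \<partial>\<nu>1)"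
    if g: "g = f \<or> g = (\<lambda>x. - f x)" for g
  proof -
    have finite: "(\<integral>\<^sup>+x. ennreal (g x) \<partial>N) < \<infinity>" if "integrable N f" for N
      using g that by (auto simp: real_integrable_def top.not_eq_extremum)
    have "g \<in> borel_measurable \<mu>1"
      using g int by auto
    then have "(\<integral>\<^sup>+x. ennreal (g x) \<partial>\<mu>1) + (\<integral>\<^sup>+x. ennreal (g x) \<partial>\<nu>2)
      = (\<integral>\<^sup>+x. ennreal (g x) \<partial>\<mu>2) + (\<integral>\<^sup>+x. ennreal (g x) \<partial>\<nu>1)"
      by (intro nn_integral_add_eq_of_measure_diff_eq[OF sets fin eq]) auto
    then have "enn2real ((\<integral>\<^sup>+x. ennreal (g x) \<partial>\<mu>1) + (\<integral>\<^sup>+x. ennreal (g x) \<partial>\<nu>2))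
      = enn2real ((\<integral>\<^sup>+x. ennreal (g x) \<partial>\<mu>2) + (\<integral>\<^sup>+x. ennreal (g x) \<partial>\<nu>1))"
      by (rule arg_cong)
    then show ?thesis
      using finite int by (simp add: enn2real_plus)
  qed
  show ?thesis
    using parts[of f] parts[of "\<lambda>x. - f x"] int by (simp add: real_lebesgue_integral_def)
qed

lemma sint_eq_integral_diff:
  assumes decomp: "signed_decomp M \<gamma> \<mu> \<nu>" and int: "integrable \<mu> \<phi>" "integrable \<nu> \<phi>"
  shows "sint M \<gamma> \<phi> = integral\<^sup>L \<mu> \<phi> - integral\<^sup>L \<nu> \<phi>"
  unfolding sint_def
proof (rule the_equality)
  fix r
  assume "\<exists>\<mu>' \<nu>'. signed_decomp M \<gamma> \<mu>' \<nu>' \<and> integrable \<mu>' \<phi> \<and> integrable \<nu>' \<phi> \<and>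
      r = integral\<^sup>L \<mu>' \<phi> - integral\<^sup>L \<nu>' \<phi>"
  then obtain \<mu>' \<nu>' where decomp': "signed_decomp M \<gamma> \<mu>' \<nu>'"
    and int': "integrable \<mu>' \<phi>" "integrable \<nu>' \<phi>" and r: "r = integral\<^sup>L \<mu>' \<phi> - integral\<^sup>L \<nu>' \<phi>"
    by blast
  have "integral\<^sup>L \<mu>' \<phi> - integral\<^sup>L \<nu>' \<phi> = integral\<^sup>L \<mu> \<phi> - integral\<^sup>L \<nu> \<phi>"
  proof (rule integral_diff_eq_of_measure_diff_eq)
    show "measure \<mu>' A - measure \<nu>' A = measure \<mu> A - measure \<nu> A" for A
      using decomp decomp' unfolding signed_decomp_def by metis
  qed (use decomp decomp' int int' in \<open>auto simp: signed_decomp_def\<close>)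
  then show "r = integral\<^sup>L \<mu> \<phi> - integral\<^sup>L \<nu> \<phi>"
    using r by simp
qed (use decomp int in blast)

lemma sint_add_const:
  assumes \<gamma>: "\<gamma> \<in> ca1 M F" "is_prob M \<gamma>" and \<psi>: "\<psi> \<in> F"
  shows "sint M \<gamma> (\<lambda>v. \<psi> v + c) = sint M \<gamma> \<psi> + c"
proof -
  obtain \<mu> \<nu> where decomp: "signed_decomp M \<gamma> \<mu> \<nu>" and int: "integrable \<mu> \<psi>" "integrable \<nu> \<psi>"
    using \<gamma> \<psi> unfolding ca1_def by blast
  have fin: "finite_measure \<mu>" "finite_measure \<nu>" and sets: "sets \<mu> = sets M" "sets \<nu> = sets M"
    and \<gamma>_eq: "\<gamma> = (\<lambda>A. measure \<mu> A - measure \<nu> A)"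
    using decomp by (auto simp: signed_decomp_def)
  have "space \<mu> = space M" "space \<nu> = space M"
    using sets by (metis sets_eq_imp_space_eq)+
  then have total: "measure \<mu> (space \<mu>) - measure \<nu> (space \<nu>) = 1"
    using \<gamma>(2) by (simp add: is_prob_def \<gamma>_eq)
  have int_const: "integrable \<mu> (\<lambda>v. c)" "integrable \<nu> (\<lambda>v. c)"
    using fin by (auto intro: finite_measure.integrable_const)
  have "sint M \<gamma> (\<lambda>v. \<psi> v + c) = integral\<^sup>L \<mu> (\<lambda>v. \<psi> v + c) - integral\<^sup>L \<nu> (\<lambda>v. \<psi> v + c)"
    using int int_const by (intro sint_eq_integral_diff[OF decomp] Bochner_Integration.integrable_add)
  also have "\<dots> = (integral\<^sup>L \<mu> \<psi> - integral\<^sup>L \<nu> \<psi>) + c * (measure \<mu> (space \<mu>) - measure \<nu> (space \<nu>))"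
    using int int_const by (simp add: Bochner_Integration.integral_add algebra_simps)
  also have "\<dots> = sint M \<gamma> \<psi> + c"
    using total sint_eq_integral_diff[OF decomp int] by simp
  finally show ?thesis .
qed

lemma integrable_mono_measure:
  fixes f :: "'a \<Rightarrow> 'b::{banach, second_countable_topology}"
  assumes sets: "sets m = sets \<mu>" and "m \<le> \<mu>" and int: "integrable \<mu> f"
  shows "integrable m f"
proof -
  have "(\<integral>\<^sup>+x. norm (f x) \<partial>m) \<le> (\<integral>\<^sup>+x. norm (f x) \<partial>\<mu>)"
    using sets \<open>m \<le> \<mu>\<close> by (rule nn_integral_mono_measure)
  moreover have "(\<integral>\<^sup>+x. norm (f x) \<partial>\<mu>) < \<infinity>"
    using int by (simp add: integrable_iff_bounded)
  moreover have "f \<in> borel_measurable m"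
    using borel_measurable_integrable[OF int] measurable_cong_sets[OF sets refl] by blast
  ultimately show ?thesis
    by (simp add: integrable_iff_bounded)
qed

lemma emeasure_diff_measure_signed_decomp:
  assumes decomp: "signed_decomp M \<gamma> \<mu> \<nu>" and nonneg: "\<And>A. 0 \<le> \<gamma> A" and A: "A \<in> sets M"
  shows "emeasure (diff_measure \<mu> \<nu>) A = ennreal (\<gamma> A)"
proof -
  have sets: "sets \<mu> = sets M" "sets \<nu> = sets M" and fin: "finite_measure \<mu>" "finite_measure \<nu>"
    and \<gamma>_eq: "\<And>A. \<gamma> A = measure \<mu> A - measure \<nu> A"
    using decomp by (auto simp: signed_decomp_def)
  have "emeasure \<nu> B \<le> emeasure \<mu> B" for B
    using nonneg[of B] fin by (simp add: \<gamma>_eq finite_measure.emeasure_eq_measure)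
  then have "emeasure (diff_measure \<mu> \<nu>) A = emeasure \<mu> A - emeasure \<nu> A"
    using fin sets A by (intro emeasure_diff_measure) auto
  also have "\<dots> = ennreal (\<gamma> A)"
    using fin nonneg[of A] by (simp add: \<gamma>_eq finite_measure.emeasure_eq_measure ennreal_minus)
  finally show ?thesis .
qed

lemma is_prob_ca1_prob_space:
  assumes \<gamma>: "\<gamma> \<in> ca1 M F" "is_prob M \<gamma>"
  obtains m where "prob_space m" "sets m = sets M" "\<And>A. measure m A = \<gamma> A"
    "\<And>\<phi>. \<phi> \<in> F \<Longrightarrow> integrable m \<phi>"
proof -
  obtain \<mu> \<nu> where decomp: "signed_decomp M \<gamma> \<mu> \<nu>" and int: "\<And>\<phi>. \<phi> \<in> F \<Longrightarrow> integrable \<mu> \<phi>"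
    using \<gamma>(1) unfolding ca1_def by blast
  have sets: "sets \<mu> = sets M" "sets \<nu> = sets M" and fin: "finite_measure \<mu>"
    and \<gamma>_eq: "\<And>A. \<gamma> A = measure \<mu> A - measure \<nu> A"
    using decomp by (auto simp: signed_decomp_def)
  have \<gamma>_nonneg: "0 \<le> \<gamma> A" for A
    using \<gamma>(2) by (simp add: is_prob_def)
  define m where "m = diff_measure \<mu> \<nu>"
  have sets_m: "sets m = sets M"
    using sets by (simp add: m_def)
  have emeasure_m: "emeasure m A = ennreal (\<gamma> A)" if "A \<in> sets M" for A
    unfolding m_def using decomp \<gamma>_nonneg that by (rule emeasure_diff_measure_signed_decomp)
  have measure_m: "measure m A = \<gamma> A" for A
  proof (cases "A \<in> sets M")
    case True
    then show ?thesis
      using emeasure_m \<gamma>_nonneg by (simp add: measure_def)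
  next
    case False
    then show ?thesis
      using sets sets_m by (simp add: \<gamma>_eq measure_notin_sets)
  qed
  have prob: "prob_space m"
  proof (rule prob_spaceI)
    show "emeasure m (space m) = 1"
      using emeasure_m[of "space M"] \<gamma>(2) sets_eq_imp_space_eq[OF sets_m] by (simp add: is_prob_def)
  qed
  have int_m: "integrable m \<phi>" if "\<phi> \<in> F" for \<phi>
  proof (rule integrable_mono_measure)
    show "sets m = sets \<mu>"
      using sets sets_m by simp
    have "emeasure m A \<le> emeasure \<mu> A" if "A \<in> sets m" for A
      using that sets_m emeasure_m \<gamma>_nonneg fin by (simp add: \<gamma>_eq finite_measure.emeasure_eq_measure)
    then show "m \<le> \<mu>"
      using sets sets_m by (simp add: le_measure)
    show "integrable \<mu> \<phi>"
      using that by (rule int)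
  qed
  show ?thesis
    by (rule that[OF prob sets_m measure_m int_m])
qed

section \<open>Test functions and marginals\<close>

lemma space_MOm [simp]: "space (MOm KK) = Omega KK"
  by (simp add: MOm_def space_restrict_space)

lemma space_MK [simp]: "space (MK KK t) = Kt KK t"
  by (simp add: MK_def space_restrict_space)

lemma measurable_vec_nth_MOm: "(\<lambda>x. x $ t) \<in> measurable (MOm KK) (MK KK t)"
  unfolding MOm_def MK_def
proof (rule measurable_restrict_space2)
  show "(\<lambda>x. x $ t) \<in> space (restrict_space borel (Omega KK)) \<rightarrow> Kt KK t"
    by (auto simp: space_restrict_space Omega_def)
  show "(\<lambda>x. x $ t) \<in> borel_measurable (restrict_space borel (Omega KK))"
    by (intro measurable_restrict_space1 borel_measurable_continuous_onI continuous_intros)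
qed

lemma Ct_borel_measurable: "\<psi> \<in> Ct KK t \<Longrightarrow> \<psi> \<in> borel_measurable (MK KK t)"
  unfolding Ct_def MK_def by (auto intro: borel_measurable_continuous_on_restrict)

lemma C0T_borel_measurable: "\<phi> \<in> C0T KK \<Longrightarrow> \<phi> \<in> borel_measurable (MOm KK)"
  unfolding C0T_def MOm_def by (auto intro: borel_measurable_continuous_on_restrict)

lemma Ct_uminus: "\<psi> \<in> Ct KK t \<Longrightarrow> (\<lambda>v. - \<psi> v) \<in> Ct KK t"
  unfolding Ct_def by (auto intro: continuous_intros)

lemma Ct_add_const:
  assumes "\<psi> \<in> Ct KK t"
  shows "(\<lambda>v. \<psi> v + c) \<in> Ct KK t"
proof -
  obtain C where growth: "\<And>v. v \<in> Kt KK t \<Longrightarrow> \<bar>\<psi> v\<bar> \<le> C * (1 + (\<Sum>j\<in>UNIV. \<bar>v $ j\<bar>))"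
    using assms unfolding Ct_def by blast
  have "\<bar>\<psi> v + c\<bar> \<le> (C + \<bar>c\<bar>) * (1 + (\<Sum>j\<in>UNIV. \<bar>v $ j\<bar>))" if "v \<in> Kt KK t" for v
  proof -
    have "1 \<le> 1 + (\<Sum>j\<in>UNIV. \<bar>v $ j\<bar>)"
      by (simp add: sum_nonneg)
    then have "\<bar>c\<bar> \<le> \<bar>c\<bar> * (1 + (\<Sum>j\<in>UNIV. \<bar>v $ j\<bar>))"
      using mult_left_mono[of 1 _ "\<bar>c\<bar>"] by simp
    then show ?thesis
      using growth[OF that] by (simp add: distrib_right)
  qed
  then show ?thesis
    using assms unfolding Ct_def by (auto intro: continuous_intros)
qed

lemma abs_vec_nth_Ct:
  fixes KK :: "'t \<Rightarrow> 'd::finite \<Rightarrow> real set"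
  shows "(\<lambda>v. \<bar>v $ j\<bar>) \<in> Ct KK t"
proof -
  have "continuous_on (Kt KK t) (\<lambda>v::real^'d. \<bar>v $ j\<bar>)"
    by (intro continuous_intros)
  moreover have "\<bar>v $ j\<bar> \<le> (\<Sum>i\<in>UNIV. \<bar>v $ i\<bar>)" for v :: "real^'d"
    by (rule member_le_sum) auto
  then have "\<forall>v\<in>Kt KK t. \<bar>\<bar>v $ j\<bar>\<bar> \<le> 1 * (1 + (\<Sum>i\<in>UNIV. \<bar>v $ i\<bar>))"
    by (simp add: add_increasing)
  ultimately show ?thesis
    unfolding Ct_def by blast
qed

lemma Ct_comp_vec_nth_C0T:
  assumes "\<psi> \<in> Ct KK t"
  shows "(\<lambda>x. \<psi> (x $ t)) \<in> C0T KK"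
proof -
  obtain c where cont: "continuous_on (Kt KK t) \<psi>"
    and growth: "\<And>v. v \<in> Kt KK t \<Longrightarrow> \<bar>\<psi> v\<bar> \<le> c * (1 + (\<Sum>j\<in>UNIV. \<bar>v $ j\<bar>))"
    using assms unfolding Ct_def by blast
  have "continuous_on (Omega KK) (\<lambda>x. \<psi> (x $ t))"
    by (rule continuous_on_compose2[OF cont]) (auto simp: Omega_def intro: continuous_intros)
  moreover have "\<bar>\<psi> (x $ t)\<bar> \<le> max c 0 * (1 + (\<Sum>s\<in>UNIV. \<Sum>j\<in>UNIV. \<bar>x $ s $ j\<bar>))"
    if x: "x \<in> Omega KK" for x
  proof -
    have "\<bar>\<psi> (x $ t)\<bar> \<le> c * (1 + (\<Sum>j\<in>UNIV. \<bar>x $ t $ j\<bar>))"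
      using growth x by (simp add: Omega_def)
    also have "\<dots> \<le> max c 0 * (1 + (\<Sum>j\<in>UNIV. \<bar>x $ t $ j\<bar>))"
      by (intro mult_right_mono) (auto intro: add_nonneg_nonneg sum_nonneg)
    also have "\<dots> \<le> max c 0 * (1 + (\<Sum>s\<in>UNIV. \<Sum>j\<in>UNIV. \<bar>x $ s $ j\<bar>))"
      by (intro mult_left_mono add_left_mono member_le_sum[where f="\<lambda>s. \<Sum>j\<in>UNIV. \<bar>x $ s $ j\<bar>"])
        (auto intro: sum_nonneg)
    finally show ?thesis .
  qed
  ultimately show ?thesis
    unfolding C0T_def by blast
qed

lemma marg_measure:
  assumes "sets \<mu> = sets (MOm KK)"
  shows "marg KK t (\<lambda>A. measure \<mu> A) = (\<lambda>B. measure (distr \<mu> (MK KK t) (\<lambda>x. x $ t)) B)"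
proof
  fix B
  have "(\<lambda>x. x $ t) \<in> measurable \<mu> (MK KK t)"
    using measurable_vec_nth_MOm measurable_cong_sets[OF assms refl] by blast
  moreover have "space \<mu> = Omega KK"
    using sets_eq_imp_space_eq[OF assms] by simp
  ultimately show "marg KK t (\<lambda>A. measure \<mu> A) B = measure (distr \<mu> (MK KK t) (\<lambda>x. x $ t)) B"
    by (cases "B \<in> sets (MK KK t)") (simp_all add: marg_def measure_distr measure_notin_sets Int_commute)
qed

lemma signed_decomp_marg:
  assumes decomp: "signed_decomp (MOm KK) \<gamma> \<mu> \<nu>"
  shows "signed_decomp (MK KK t) (marg KK t \<gamma>)
    (distr \<mu> (MK KK t) (\<lambda>x. x $ t)) (distr \<nu> (MK KK t) (\<lambda>x. x $ t))"
proof -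
  have sets: "sets \<mu> = sets (MOm KK)" "sets \<nu> = sets (MOm KK)"
    and fin: "finite_measure \<mu>" "finite_measure \<nu>"
    and \<gamma>_eq: "\<gamma> = (\<lambda>A. measure \<mu> A - measure \<nu> A)"
    using decomp by (auto simp: signed_decomp_def)
  have "marg KK t \<gamma> B = marg KK t (\<lambda>A. measure \<mu> A) B - marg KK t (\<lambda>A. measure \<nu> A) B" for B
    by (simp add: marg_def \<gamma>_eq)
  then have "marg KK t \<gamma> = (\<lambda>B. measure (distr \<mu> (MK KK t) (\<lambda>x. x $ t)) B
      - measure (distr \<nu> (MK KK t) (\<lambda>x. x $ t)) B)"
    by (simp add: marg_measure[OF sets(1)] marg_measure[OF sets(2)] fun_eq_iff)
  moreover have "(\<lambda>x. x $ t) \<in> measurable \<mu> (MK KK t)" "(\<lambda>x. x $ t) \<in> measurable \<nu> (MK KK t)"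
    using measurable_vec_nth_MOm measurable_cong_sets[OF sets(1) refl] measurable_cong_sets[OF sets(2) refl]
    by blast+
  ultimately show ?thesis
    unfolding signed_decomp_def using fin by (auto intro: finite_measure.finite_measure_distr)
qed

lemma marg_in_caK_and_sint_marg:
  assumes \<gamma>: "\<gamma> \<in> caOm KK"
  shows marg_in_caK: "marg KK t \<gamma> \<in> caK KK t"
    and sint_marg: "\<psi> \<in> Ct KK t \<Longrightarrow> sint (MK KK t) (marg KK t \<gamma>) \<psi> = sint (MOm KK) \<gamma> (\<lambda>x. \<psi> (x $ t))"
proof -
  obtain \<mu> \<nu> where decomp: "signed_decomp (MOm KK) \<gamma> \<mu> \<nu>"
    and int: "\<And>\<phi>. \<phi> \<in> C0T KK \<Longrightarrow> integrable \<mu> \<phi> \<and> integrable \<nu> \<phi>"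
    using \<gamma> unfolding ca1_def by blast
  have sets: "sets \<mu> = sets (MOm KK)" "sets \<nu> = sets (MOm KK)"
    using decomp by (auto simp: signed_decomp_def)
  have proj: "(\<lambda>x. x $ t) \<in> measurable \<mu> (MK KK t)" "(\<lambda>x. x $ t) \<in> measurable \<nu> (MK KK t)"
    using measurable_vec_nth_MOm measurable_cong_sets[OF sets(1) refl] measurable_cong_sets[OF sets(2) refl]
    by blast+
  have int_distr: "integrable (distr \<mu> (MK KK t) (\<lambda>x. x $ t)) \<psi> \<and> integrable (distr \<nu> (MK KK t) (\<lambda>x. x $ t)) \<psi>"
    if "\<psi> \<in> Ct KK t" for \<psi>
    using int[OF Ct_comp_vec_nth_C0T[OF that]] Ct_borel_measurable[OF that] proj
    by (simp add: integrable_distr_eq)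
  show "marg KK t \<gamma> \<in> caK KK t"
    unfolding ca1_def using signed_decomp_marg[OF decomp] int_distr by blast
  assume \<psi>: "\<psi> \<in> Ct KK t"
  have "sint (MK KK t) (marg KK t \<gamma>) \<psi>
      = integral\<^sup>L (distr \<mu> (MK KK t) (\<lambda>x. x $ t)) \<psi> - integral\<^sup>L (distr \<nu> (MK KK t) (\<lambda>x. x $ t)) \<psi>"
    using sint_eq_integral_diff[OF signed_decomp_marg[OF decomp]] int_distr[OF \<psi>] by blast
  also have "\<dots> = integral\<^sup>L \<mu> (\<lambda>x. \<psi> (x $ t)) - integral\<^sup>L \<nu> (\<lambda>x. \<psi> (x $ t))"
    using proj Ct_borel_measurable[OF \<psi>] by (simp add: integral_distr)
  also have "\<dots> = sint (MOm KK) \<gamma> (\<lambda>x. \<psi> (x $ t))"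
    using sint_eq_integral_diff[OF decomp] int[OF Ct_comp_vec_nth_C0T[OF \<psi>]] by simp
  finally show "sint (MK KK t) (marg KK t \<gamma>) \<psi> = sint (MOm KK) \<gamma> (\<lambda>x. \<psi> (x $ t))" .
qed

lemma sint_sum_vec_nth:
  assumes \<gamma>: "\<gamma> \<in> caOm KK" and \<psi>: "\<And>t. \<psi> t \<in> Ct KK t"
  shows "sint (MOm KK) \<gamma> (\<lambda>x. \<Sum>t\<in>UNIV. \<psi> t (x $ t)) = (\<Sum>t\<in>UNIV. sint (MK KK t) (marg KK t \<gamma>) (\<psi> t))"
proof -
  obtain \<mu> \<nu> where decomp: "signed_decomp (MOm KK) \<gamma> \<mu> \<nu>"
    and int: "\<And>\<phi>. \<phi> \<in> C0T KK \<Longrightarrow> integrable \<mu> \<phi> \<and> integrable \<nu> \<phi>"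
    using \<gamma> unfolding ca1_def by blast
  have int_t: "integrable \<mu> (\<lambda>x. \<psi> t (x $ t))" "integrable \<nu> (\<lambda>x. \<psi> t (x $ t))" for t
    using int[OF Ct_comp_vec_nth_C0T[OF \<psi>]] by blast+
  have "sint (MOm KK) \<gamma> (\<lambda>x. \<Sum>t\<in>UNIV. \<psi> t (x $ t))
      = (\<Sum>t\<in>UNIV. integral\<^sup>L \<mu> (\<lambda>x. \<psi> t (x $ t))) - (\<Sum>t\<in>UNIV. integral\<^sup>L \<nu> (\<lambda>x. \<psi> t (x $ t)))"
    using int_t by (simp add: sint_eq_integral_diff[OF decomp] Bochner_Integration.integral_sum)
  also have "\<dots> = (\<Sum>t\<in>UNIV. sint (MOm KK) \<gamma> (\<lambda>x. \<psi> t (x $ t)))"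
    using int_t by (simp add: sint_eq_integral_diff[OF decomp] sum_subtractf)
  finally show ?thesis
    using sint_marg[OF \<gamma> \<psi>] by simp
qed

section \<open>Weak topologies and lower semicontinuity\<close>

lemma topspace_weak_top: "G \<noteq> {} \<Longrightarrow> topspace (weak_top M C G) = C"
  unfolding weak_top_def by auto

lemma continuous_map_weak_top:
  assumes G1: "G1 \<noteq> {}" and G2: "G2 \<noteq> {}"
    and maps: "\<And>\<gamma>. \<gamma> \<in> C1 \<Longrightarrow> f \<gamma> \<in> C2"
    and sint_f: "\<And>\<phi>. \<phi> \<in> G2 \<Longrightarrow> \<exists>\<phi>'\<in>G1. \<forall>\<gamma>\<in>C1. sint M2 (f \<gamma>) \<phi> = sint M1 \<gamma> \<phi>'"
  shows "continuous_map (weak_top M1 C1 G1) (weak_top M2 C2 G2) f"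
  unfolding weak_top_def[of M2]
proof (rule continuous_on_generated_topo)
  fix U
  assume "U \<in> {{\<gamma>\<in>C2. sint M2 \<gamma> \<phi> \<in> V} | \<phi> V. \<phi> \<in> G2 \<and> open V}"
  then obtain \<phi> V where U: "U = {\<gamma>\<in>C2. sint M2 \<gamma> \<phi> \<in> V}" and "\<phi> \<in> G2" "open V"
    by blast
  then obtain \<phi>' where "\<phi>' \<in> G1" and \<phi>': "\<forall>\<gamma>\<in>C1. sint M2 (f \<gamma>) \<phi> = sint M1 \<gamma> \<phi>'"
    using sint_f by blast
  have "f -` U \<inter> topspace (weak_top M1 C1 G1) = {\<gamma>\<in>C1. sint M1 \<gamma> \<phi>' \<in> V}"
    using U \<phi>' maps topspace_weak_top[OF G1] by auto
  moreover have "openin (weak_top M1 C1 G1) {\<gamma>\<in>C1. sint M1 \<gamma> \<phi>' \<in> V}"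
    unfolding weak_top_def using \<open>\<phi>' \<in> G1\<close> \<open>open V\<close> by (intro topology_generated_by_Basis) blast
  ultimately show "openin (weak_top M1 C1 G1) (f -` U \<inter> topspace (weak_top M1 C1 G1))"
    by simp
next
  show "f ` topspace (weak_top M1 C1 G1) \<subseteq> \<Union> {{\<gamma>\<in>C2. sint M2 \<gamma> \<phi> \<in> V} | \<phi> V. \<phi> \<in> G2 \<and> open V}"
    using maps topspace_weak_top[OF G1] topspace_weak_top[OF G2, of M2 C2]
    unfolding weak_top_def by auto
qed

lemma continuous_map_marg:
  assumes "E t \<subseteq> Ct KK t" "E t \<noteq> {}"
  shows "continuous_map (weak_top (MOm KK) (caOm KK) (testE E)) (weak_top (MK KK t) (caK KK t) (E t))
    (marg KK t)"
proof (rule continuous_map_weak_top)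
  show "testE E \<noteq> {}"
    using assms(2) unfolding testE_def by blast
  show "\<exists>\<phi>'\<in>testE E. \<forall>\<gamma>\<in>caOm KK. sint (MK KK t) (marg KK t \<gamma>) \<phi> = sint (MOm KK) \<gamma> \<phi>'"
    if "\<phi> \<in> E t" for \<phi>
  proof
    show "(\<lambda>x. \<phi> (x $ t)) \<in> testE E"
      using that unfolding testE_def by blast
    show "\<forall>\<gamma>\<in>caOm KK. sint (MK KK t) (marg KK t \<gamma>) \<phi> = sint (MOm KK) \<gamma> (\<lambda>x. \<phi> (x $ t))"
      using that assms(1) sint_marg by blast
  qed
qed (use assms marg_in_caK in auto)

lemma lsc_on_iff_openin_less: "lsc_on X f \<longleftrightarrow> (\<forall>a. openin X {x \<in> topspace X. a < f x})"
proof -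
  have "topspace X - {x \<in> topspace X. f x \<le> a} = {x \<in> topspace X. a < f x}" for a
    by auto
  then show ?thesis
    unfolding lsc_on_def closedin_def by auto
qed

lemma lsc_on_compose:
  assumes "continuous_map X Y g" "lsc_on Y f"
  shows "lsc_on X (\<lambda>x. f (g x))"
  unfolding lsc_on_def
proof
  fix a
  have "closedin X {x \<in> topspace X. g x \<in> {y \<in> topspace Y. f y \<le> a}}"
    using assms unfolding lsc_on_def by (blast intro: closedin_continuous_map_preimage)
  moreover have "{x \<in> topspace X. g x \<in> {y \<in> topspace Y. f y \<le> a}} = {x \<in> topspace X. f (g x) \<le> a}"
    using continuous_map_image_subset_topspace[OF assms(1)] by auto
  ultimately show "closedin X {x \<in> topspace X. f (g x) \<le> a}"
    by simp
qed

lemma lsc_on_sum: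
  fixes f :: "'i \<Rightarrow> 'a \<Rightarrow> ereal"
  assumes "finite I" and lsc: "\<And>i. i \<in> I \<Longrightarrow> lsc_on X (f i)"
    and not_MInfty: "\<And>i x. i \<in> I \<Longrightarrow> x \<in> topspace X \<Longrightarrow> f i x \<noteq> -\<infinity>"
  shows "lsc_on X (\<lambda>x. \<Sum>i\<in>I. f i x)"
  unfolding lsc_on_iff_openin_less
proof
  fix a
  let ?R = "{r. a < (\<Sum>i\<in>I. ereal (r i))}"
  have "{x \<in> topspace X. a < (\<Sum>i\<in>I. f i x)}
      = (\<Union>r\<in>?R. (\<Inter>i\<in>I. {x \<in> topspace X. ereal (r i) < f i x}) \<inter> topspace X)"
  proof (intro equalityI subsetI)
    fix x
    assume "x \<in> {x \<in> topspace X. a < (\<Sum>i\<in>I. f i x)}"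
    then show "x \<in> (\<Union>r\<in>?R. (\<Inter>i\<in>I. {x \<in> topspace X. ereal (r i) < f i x}) \<inter> topspace X)"
      using ereal_less_sum_split[OF \<open>finite I\<close>, of "\<lambda>i. f i x" a] not_MInfty by auto
  next
    fix x
    assume "x \<in> (\<Union>r\<in>?R. (\<Inter>i\<in>I. {x \<in> topspace X. ereal (r i) < f i x}) \<inter> topspace X)"
    then obtain r where "a < (\<Sum>i\<in>I. ereal (r i))" "\<forall>i\<in>I. ereal (r i) < f i x" "x \<in> topspace X"
      by blast
    moreover have "(\<Sum>i\<in>I. ereal (r i)) \<le> (\<Sum>i\<in>I. f i x)"
      using calculation(2) by (intro sum_mono) auto
    ultimately show "x \<in> {x \<in> topspace X. a < (\<Sum>i\<in>I. f i x)}"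
      by auto
  qed
  moreover have "openin X (\<Union>r\<in>?R. (\<Inter>i\<in>I. {x \<in> topspace X. ereal (r i) < f i x}) \<inter> topspace X)"
    using lsc \<open>finite I\<close> unfolding lsc_on_iff_openin_less by (intro openin_Union) auto
  ultimately show "openin X {x \<in> topspace X. a < (\<Sum>i\<in>I. f i x)}"
    by simp
qed

lemma lsc_on_marg:
  assumes "E t \<subseteq> Ct KK t" "E t \<noteq> {}" "lsc_on (weak_top (MK KK t) (caK KK t) (E t)) (D t)"
  shows "lsc_on (weak_top (MOm KK) (caOm KK) (testE E)) (\<lambda>\<gamma>. D t (marg KK t \<gamma>))"
  using continuous_map_marg[where E=E and t=t and KK=KK, OF assms(1,2)] assms(3) by (rule lsc_on_compose)

lemma lsc_on_Dtot:
  assumes "\<And>t. E t \<subseteq> Ct KK t" "\<And>t. E t \<noteq> {}"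
    and lsc: "\<And>t. lsc_on (weak_top (MK KK t) (caK KK t) (E t)) (D t)"
    and D_neq_MInfty: "\<And>t \<xi>. \<xi> \<in> caK KK t \<Longrightarrow> D t \<xi> \<noteq> -\<infinity>"
  shows "lsc_on (weak_top (MOm KK) (caOm KK) (testE E)) (Dtot KK D)"
  unfolding Dtot_def[abs_def]
proof (rule lsc_on_sum)
  have "topspace (weak_top (MOm KK) (caOm KK) (testE E)) = caOm KK"
    using assms(2) unfolding testE_def by (intro topspace_weak_top) blast
  then show "D t (marg KK t \<gamma>) \<noteq> -\<infinity>"
    if "\<gamma> \<in> topspace (weak_top (MOm KK) (caOm KK) (testE E))" for t \<gamma>
    using that by (simp add: D_neq_MInfty marg_in_caK)
  show "lsc_on (weak_top (MOm KK) (caOm KK) (testE E)) (\<lambda>\<gamma>. D t (marg KK t \<gamma>))" for t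
    using assms(1,2) lsc by (rule lsc_on_marg)
qed simp

section \<open>Probability measures on \<open>\<Omega>\<close> with prescribed marginals\<close>

lemma measure_in_ca1:
  assumes "finite_measure P" "sets P = sets M" "\<And>\<phi>. \<phi> \<in> F \<Longrightarrow> integrable P \<phi>"
  shows "(\<lambda>A. measure P A) \<in> ca1 M F"
proof -
  have "signed_decomp M (\<lambda>A. measure P A) P (null_measure M)"
    unfolding signed_decomp_def using assms(1,2) by (auto intro: finite_measureI)
  moreover have "integrable (null_measure M) \<phi>" if "\<phi> \<in> F" for \<phi>
  proof -
    have "\<phi> \<in> borel_measurable M"
      using borel_measurable_integrable[OF assms(3)[OF that]] measurable_cong_sets[OF assms(2) refl]
      by blast
    then show ?thesis
      by (simp add: integrable_null_measure_iff)
  qed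
  ultimately show ?thesis
    unfolding ca1_def using assms(3) by blast
qed

lemma integrable_C0T:
  assumes sets: "sets P = sets (MOm KK)" and fin: "finite_measure P"
    and coord: "\<And>t j. integrable P (\<lambda>x. \<bar>x $ t $ j\<bar>)"
    and \<phi>: "\<phi> \<in> C0T KK"
  shows "integrable P \<phi>"
proof -
  obtain c where growth: "\<And>x. x \<in> Omega KK \<Longrightarrow> \<bar>\<phi> x\<bar> \<le> c * (1 + (\<Sum>t\<in>UNIV. \<Sum>j\<in>UNIV. \<bar>x $ t $ j\<bar>))"
    using \<phi> unfolding C0T_def by blast
  let ?bound = "\<lambda>x. max c 0 * (1 + (\<Sum>t\<in>UNIV. \<Sum>j\<in>UNIV. \<bar>x $ t $ j\<bar>))"
  have "integrable P (\<lambda>x. \<Sum>t\<in>UNIV. \<Sum>j\<in>UNIV. \<bar>x $ t $ j\<bar>)"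
    using coord by (intro Bochner_Integration.integrable_sum)
  then have "integrable P ?bound"
    using finite_measure.integrable_const[OF fin]
    by (intro Bochner_Integration.integrable_mult_right Bochner_Integration.integrable_add)
  moreover have "\<phi> \<in> borel_measurable P"
    using C0T_borel_measurable[OF \<phi>] measurable_cong_sets[OF sets refl] by blast
  moreover have "AE x in P. norm (\<phi> x) \<le> norm (?bound x)"
  proof (rule AE_I2)
    fix x
    assume "x \<in> space P"
    have nonneg: "0 \<le> (\<Sum>t\<in>UNIV. \<Sum>j\<in>UNIV. \<bar>x $ t $ j\<bar>)"
      by (intro sum_nonneg) auto
    have "x \<in> Omega KK"
      using \<open>x \<in> space P\<close> sets_eq_imp_space_eq[OF sets] by simp
    then have "\<bar>\<phi> x\<bar> \<le> c * (1 + (\<Sum>t\<in>UNIV. \<Sum>j\<in>UNIV. \<bar>x $ t $ j\<bar>))"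
      by (rule growth)
    also have "\<dots> \<le> ?bound x"
      using nonneg by (intro mult_right_mono) auto
    finally show "norm (\<phi> x) \<le> norm (?bound x)"
      using nonneg by simp
  qed
  ultimately show ?thesis
    by (rule Bochner_Integration.integrable_bound)
qed

lemma measurable_vec_lambda_MOm:
  fixes m :: "'t::finite \<Rightarrow> (real^'d::finite) measure"
  assumes sets: "\<And>t. sets (m t) = sets (MK KK t)"
  shows "(\<lambda>f. vec_lambda f) \<in> measurable (PiM UNIV m) (MOm KK)"
  unfolding MOm_def
proof (rule measurable_restrict_space2)
  have "space (m t) = Kt KK t" for t
    using sets_eq_imp_space_eq[OF sets[of t]] by simp
  then show "(\<lambda>f. vec_lambda f) \<in> space (PiM UNIV m) \<rightarrow> Omega KK"
    by (auto simp: space_PiM Omega_def PiE_def)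
  show "(\<lambda>f. vec_lambda f) \<in> borel_measurable (PiM UNIV m)"
  proof (subst borel_measurable_euclidean_space, intro ballI)
    fix b :: "real^'d^'t"
    assume "b \<in> Basis"
    then obtain t u where b: "b = axis t u" "u \<in> Basis"
      unfolding Basis_vec_def by blast
    have "(\<lambda>v::real^'d. v \<bullet> u) \<in> borel_measurable (MK KK t)"
      unfolding MK_def by (intro measurable_restrict_space1 borel_measurable_continuous_onI continuous_intros)
    then have "(\<lambda>v::real^'d. v \<bullet> u) \<in> borel_measurable (m t)"
      using measurable_cong_sets[OF sets[of t] refl] by blast
    then have "(\<lambda>f. f t \<bullet> u) \<in> borel_measurable (PiM UNIV m)"
      using measurable_compose[OF measurable_component_singleton[of t UNIV m]] by simp
    then show "(\<lambda>f. vec_lambda f \<bullet> b) \<in> borel_measurable (PiM UNIV m)"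
      unfolding b(1) inner_axis by simp
  qed
qed

lemma measure_in_caOm:
  assumes sets: "sets P = sets (MOm KK)" and fin: "finite_measure P"
    and marginals: "\<And>t j. integrable (distr P (MK KK t) (\<lambda>x. x $ t)) (\<lambda>v. \<bar>v $ j\<bar>)"
  shows "(\<lambda>A. measure P A) \<in> caOm KK"
proof (rule measure_in_ca1[OF fin sets])
  have coord: "integrable P (\<lambda>x. \<bar>x $ t $ j\<bar>)" for t j
  proof -
    have "(\<lambda>x. x $ t) \<in> measurable P (MK KK t)"
      using measurable_vec_nth_MOm measurable_cong_sets[OF sets refl] by blast
    from integrable_distr_eq[OF this Ct_borel_measurable[OF abs_vec_nth_Ct]] show ?thesis
      using marginals by simp
  qed
  show "integrable P \<phi>" if "\<phi> \<in> C0T KK" for \<phi>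
    using sets fin coord that by (rule integrable_C0T)
qed

lemma
  fixes m :: "'t::finite \<Rightarrow> (real^'d::finite) measure"
  assumes prob: "\<And>t. prob_space (m t)" and sets: "\<And>t. sets (m t) = sets (MK KK t)"
  defines "P \<equiv> distr (PiM UNIV m) (MOm KK) (\<lambda>f. vec_lambda f)"
  shows prob_space_vec_lambda_PiM: "prob_space P"
    and marginal_vec_lambda_PiM: "distr P (MK KK t) (\<lambda>x. x $ t) = m t"
proof -
  interpret product_prob_space m UNIV
    by (simp add: product_prob_space_def product_prob_space_axioms_def product_sigma_finite_def
        prob_space_imp_sigma_finite prob)
  have vec: "(\<lambda>f. vec_lambda f) \<in> measurable (PiM UNIV m) (MOm KK)"
    using sets by (rule measurable_vec_lambda_MOm)
  then show "prob_space P"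
    unfolding P_def by (rule prob_space_distr)
  have "distr P (MK KK t) (\<lambda>x. x $ t) = distr (PiM UNIV m) (MK KK t) ((\<lambda>x. x $ t) \<circ> (\<lambda>f. vec_lambda f))"
    unfolding P_def by (rule distr_distr[OF measurable_vec_nth_MOm vec])
  also have "\<dots> = distr (PiM UNIV m) (m t) (\<lambda>f. f t)"
    by (rule distr_cong) (simp_all add: sets)
  also have "\<dots> = m t"
    by (rule PiM_component) simp
  finally show "distr P (MK KK t) (\<lambda>x. x $ t) = m t" .
qed

lemma ex_caOm_with_marginals:
  fixes KK :: "'t::finite \<Rightarrow> 'd::finite \<Rightarrow> real set"
  assumes \<xi>: "\<And>t. \<xi> t \<in> caK KK t" "\<And>t. is_prob (MK KK t) (\<xi> t)"
  shows "\<exists>\<gamma>\<in>caOm KK. \<forall>t. marg KK t \<gamma> = \<xi> t"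
proof -
  have "\<exists>m. prob_space m \<and> sets m = sets (MK KK t) \<and> (\<forall>A. measure m A = \<xi> t A)
      \<and> (\<forall>\<psi>\<in>Ct KK t. integrable m \<psi>)" for t
    by (rule is_prob_ca1_prob_space[OF \<xi>(1)[of t] \<xi>(2)[of t]]) blast
  then obtain m where prob: "\<And>t. prob_space (m t)" and sets_m: "\<And>t. sets (m t) = sets (MK KK t)"
    and measure_m: "\<And>t A. measure (m t) A = \<xi> t A"
    and int_m: "\<And>t \<psi>. \<psi> \<in> Ct KK t \<Longrightarrow> integrable (m t) \<psi>"
    by metis
  define P where "P = distr (PiM UNIV m) (MOm KK) (\<lambda>f. vec_lambda f)"
  have sets_P: "sets P = sets (MOm KK)"
    unfolding P_def by simp
  have marginal_P: "distr P (MK KK t) (\<lambda>x. x $ t) = m t" for t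
    unfolding P_def using prob sets_m by (rule marginal_vec_lambda_PiM)
  have "(\<lambda>A. measure P A) \<in> caOm KK"
  proof (rule measure_in_caOm[OF sets_P])
    show "finite_measure P"
      unfolding P_def using prob_space_vec_lambda_PiM[OF prob sets_m] by (rule prob_space.finite_measure)
    show "integrable (distr P (MK KK t) (\<lambda>x. x $ t)) (\<lambda>v. \<bar>v $ j\<bar>)" for t j
      unfolding marginal_P by (rule int_m[OF abs_vec_nth_Ct])
  qed
  moreover have "marg KK t (\<lambda>A. measure P A) = \<xi> t" for t
    using measure_m by (simp only: marg_measure[OF sets_P] marginal_P)
  ultimately show ?thesis
    by blast
qed

section \<open>Decomposition of \<open>V\<close>, \<open>U\<close> and \<open>S\<^sup>U\<close>\<close>

lemma sint_minus_Dtot: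
  assumes \<gamma>: "\<gamma> \<in> caOm KK" and \<psi>: "\<And>t. \<psi> t \<in> Ct KK t"
    and D: "\<And>t. D t (marg KK t \<gamma>) \<noteq> -\<infinity>"
  shows "ereal (sint (MOm KK) \<gamma> (\<lambda>x. \<Sum>t\<in>UNIV. \<psi> t (x $ t))) - Dtot KK D \<gamma>
    = (\<Sum>t\<in>UNIV. ereal (sint (MK KK t) (marg KK t \<gamma>) (\<psi> t)) - D t (marg KK t \<gamma>))"
  unfolding Dtot_def sint_sum_vec_nth[OF \<gamma> \<psi>] using D by (rule ereal_minus_sum)

locale prob_penalties =
  fixes KK :: "'t::finite \<Rightarrow> 'd::finite \<Rightarrow> real set"
    and D :: "'t \<Rightarrow> ((real^'d) set \<Rightarrow> real) \<Rightarrow> ereal"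
  assumes D_neq_MInfty: "\<And>t \<xi>. \<xi> \<in> caK KK t \<Longrightarrow> D t \<xi> \<noteq> -\<infinity>"
    and D_finite_somewhere: "\<And>t. \<exists>\<xi>\<in>caK KK t. D t \<xi> < \<infinity>"
    and dom_D_is_prob: "\<And>t \<xi>. \<xi> \<in> caK KK t \<Longrightarrow> D t \<xi> < \<infinity> \<Longrightarrow> is_prob (MK KK t) \<xi>"
begin

lemma Vt_neq_MInfty: "Vt KK D t \<psi> \<noteq> -\<infinity>"
proof -
  obtain \<xi> where \<xi>: "\<xi> \<in> caK KK t" "D t \<xi> < \<infinity>"
    using D_finite_somewhere by blast
  then have "ereal (sint (MK KK t) \<xi> \<psi>) - D t \<xi> \<noteq> -\<infinity>"
    using D_neq_MInfty[OF \<xi>(1)] by (cases "D t \<xi>") auto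
  moreover have "ereal (sint (MK KK t) \<xi> \<psi>) - D t \<xi> \<le> Vt KK D t \<psi>"
    unfolding Vt_def by (rule SUP_upper[OF \<xi>(1)])
  ultimately show ?thesis
    by auto
qed

lemma VV_le_sum_Vt:
  assumes \<psi>: "\<And>t. \<psi> t \<in> Ct KK t"
  shows "VV KK D \<psi> \<le> (\<Sum>t\<in>UNIV. Vt KK D t (\<psi> t))"
  unfolding VV_def
proof (rule SUP_least)
  fix \<gamma>
  assume \<gamma>: "\<gamma> \<in> caOm KK"
  have "ereal (sint (MOm KK) \<gamma> (\<lambda>x. \<Sum>t\<in>UNIV. \<psi> t (x $ t))) - Dtot KK D \<gamma>
      = (\<Sum>t\<in>UNIV. ereal (sint (MK KK t) (marg KK t \<gamma>) (\<psi> t)) - D t (marg KK t \<gamma>))"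
    using \<gamma> \<psi> D_neq_MInfty[OF marg_in_caK[OF \<gamma>]] by (rule sint_minus_Dtot)
  also have "\<dots> \<le> (\<Sum>t\<in>UNIV. Vt KK D t (\<psi> t))"
    unfolding Vt_def by (intro sum_mono SUP_upper marg_in_caK[OF \<gamma>])
  finally show "ereal (sint (MOm KK) \<gamma> (\<lambda>x. \<Sum>t\<in>UNIV. \<psi> t (x $ t))) - Dtot KK D \<gamma>
      \<le> (\<Sum>t\<in>UNIV. Vt KK D t (\<psi> t))" .
qed

lemma sum_Vt_le_VV:
  assumes \<psi>: "\<And>t. \<psi> t \<in> Ct KK t"
  shows "(\<Sum>t\<in>UNIV. Vt KK D t (\<psi> t)) \<le> VV KK D \<psi>"
proof (rule dense_le)
  fix a
  assume "a < (\<Sum>t\<in>UNIV. Vt KK D t (\<psi> t))"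
  then obtain r where r: "\<And>t. ereal (r t) < Vt KK D t (\<psi> t)" and a: "a < (\<Sum>t\<in>UNIV. ereal (r t))"
    using ereal_less_sum_split[of UNIV "\<lambda>t. Vt KK D t (\<psi> t)" a] Vt_neq_MInfty by auto
  have "\<exists>\<xi>\<in>caK KK t. ereal (r t) < ereal (sint (MK KK t) \<xi> (\<psi> t)) - D t \<xi>" for t
    using r[of t] unfolding Vt_def by (simp add: less_SUP_iff)
  then obtain \<xi> where \<xi>: "\<And>t. \<xi> t \<in> caK KK t"
    and less: "\<And>t. ereal (r t) < ereal (sint (MK KK t) (\<xi> t) (\<psi> t)) - D t (\<xi> t)"
    by metis
  have "D t (\<xi> t) < \<infinity>" for t
    using less[of t] by (cases "D t (\<xi> t)") auto
  then obtain \<gamma> where \<gamma>: "\<gamma> \<in> caOm KK" "\<And>t. marg KK t \<gamma> = \<xi> t"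
    using ex_caOm_with_marginals[OF \<xi> dom_D_is_prob[OF \<xi>]] by blast
  have "a < (\<Sum>t\<in>UNIV. ereal (r t))"
    by (rule a)
  also have "\<dots> \<le> (\<Sum>t\<in>UNIV. ereal (sint (MK KK t) (\<xi> t) (\<psi> t)) - D t (\<xi> t))"
    using less by (intro sum_mono less_imp_le)
  also have "\<dots> = ereal (sint (MOm KK) \<gamma> (\<lambda>x. \<Sum>t\<in>UNIV. \<psi> t (x $ t))) - Dtot KK D \<gamma>"
    using sint_minus_Dtot[OF \<gamma>(1) \<psi>] \<gamma>(2) D_neq_MInfty[OF \<xi>] by simp
  also have "\<dots> \<le> VV KK D \<psi>"
    unfolding VV_def by (rule SUP_upper[OF \<gamma>(1)])
  finally show "a \<le> VV KK D \<psi>"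
    by simp
qed

lemma VV_eq_sum_Vt: "(\<And>t. \<psi> t \<in> Ct KK t) \<Longrightarrow> VV KK D \<psi> = (\<Sum>t\<in>UNIV. Vt KK D t (\<psi> t))"
  by (intro antisym VV_le_sum_Vt sum_Vt_le_VV)

lemma Vt_add_const:
  assumes \<psi>: "\<psi> \<in> Ct KK t"
  shows "Vt KK D t (\<lambda>v. \<psi> v + c) = Vt KK D t \<psi> + ereal c"
proof -
  have "ereal (sint (MK KK t) \<xi> (\<lambda>v. \<psi> v + c)) - D t \<xi> = (ereal (sint (MK KK t) \<xi> \<psi>) - D t \<xi>) + ereal c"
    if \<xi>: "\<xi> \<in> caK KK t" for \<xi>
  proof (cases "D t \<xi> = \<infinity>")
    case True
    then show ?thesis by simp
  next
    case False
    then have "sint (MK KK t) \<xi> (\<lambda>v. \<psi> v + c) = sint (MK KK t) \<xi> \<psi> + c"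
      using dom_D_is_prob[OF \<xi>] by (intro sint_add_const[OF \<xi> _ \<psi>]) (simp add: top.not_eq_extremum)
    then show ?thesis
      using False D_neq_MInfty[OF \<xi>] by (cases "D t \<xi>") auto
  qed
  then have "Vt KK D t (\<lambda>v. \<psi> v + c) = (SUP \<xi>\<in>caK KK t. (ereal (sint (MK KK t) \<xi> \<psi>) - D t \<xi>) + ereal c)"
    unfolding Vt_def by (intro SUP_cong) auto
  also have "\<dots> = Vt KK D t \<psi> + ereal c"
    unfolding Vt_def using D_finite_somewhere[of t] by (intro SUP_ereal_add_left) auto
  finally show ?thesis .
qed

lemma Ut_add_const:
  assumes "\<psi> \<in> Ct KK t"
  shows "Ut KK D t (\<lambda>v. \<psi> v + c) = Ut KK D t \<psi> + ereal c"
proof -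
  have "Vt KK D t (\<lambda>v. - (\<psi> v + c)) = Vt KK D t (\<lambda>v. - \<psi> v) + ereal (- c)"
    using Vt_add_const[OF Ct_uminus[OF assms], of "- c"] by simp
  then show ?thesis
    unfolding Ut_def by (cases "Vt KK D t (\<lambda>v. - \<psi> v)") auto
qed

lemma UU_eq_sum_Ut:
  assumes \<phi>: "\<And>t. \<phi> t \<in> Ct KK t"
  shows "UU KK D \<phi> = (\<Sum>t\<in>UNIV. Ut KK D t (\<phi> t))"
proof -
  have "UU KK D \<phi> = - (\<Sum>t\<in>UNIV. Vt KK D t (\<lambda>v. - \<phi> t v))"
    unfolding UU_def using VV_eq_sum_Vt[of "\<lambda>t v. - \<phi> t v"] Ct_uminus[OF \<phi>] by simp
  also have "\<dots> = (\<Sum>t\<in>UNIV. Ut KK D t (\<phi> t))"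
    unfolding Ut_def using Vt_neq_MInfty by (rule ereal_uminus_sum)
  finally show ?thesis .
qed

lemma SUt_eq_Ut:
  assumes "\<psi> \<in> Ct KK t"
  shows "SUt KK D t \<psi> = Ut KK D t \<psi>"
proof -
  have "Ut KK D t (\<lambda>v. \<psi> v + \<alpha>) - ereal \<alpha> = Ut KK D t \<psi>" for \<alpha>
    using Ut_add_const[OF assms, of \<alpha>] by (cases "Ut KK D t \<psi>") auto
  then show ?thesis
    unfolding SUt_def by simp
qed

lemma SU_eq_sum_SUt:
  assumes \<phi>: "\<And>t. \<phi> t \<in> Ct KK t"
  shows "SU KK D \<phi> = (\<Sum>t\<in>UNIV. SUt KK D t (\<phi> t))"
proof -
  have "UU KK D (\<lambda>t v. \<phi> t v + \<beta> $ t) - ereal (\<Sum>t\<in>UNIV. \<beta> $ t) = (\<Sum>t\<in>UNIV. Ut KK D t (\<phi> t))"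
    for \<beta> :: "real^'t"
  proof -
    have "UU KK D (\<lambda>t v. \<phi> t v + \<beta> $ t) = (\<Sum>t\<in>UNIV. Ut KK D t (\<lambda>v. \<phi> t v + \<beta> $ t))"
      using Ct_add_const[OF \<phi>] by (rule UU_eq_sum_Ut)
    also have "\<dots> = (\<Sum>t\<in>UNIV. Ut KK D t (\<phi> t)) + ereal (\<Sum>t\<in>UNIV. \<beta> $ t)"
      using Ut_add_const[OF \<phi>] by (simp add: sum.distrib)
    finally show ?thesis
      by (cases "\<Sum>t\<in>UNIV. Ut KK D t (\<phi> t)") auto
  qed
  then show ?thesis
    unfolding SU_def using SUt_eq_Ut[OF \<phi>] by simp
qed

end

theorem lemma3p6:
  fixes KK :: "'t::finite \<Rightarrow> 'd::finite \<Rightarrow> real set"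
    and E :: "'t \<Rightarrow> (real^'d \<Rightarrow> real) set"
    and D :: "'t \<Rightarrow> ((real^'d) set \<Rightarrow> real) \<Rightarrow> ereal"
  assumes T_ge1: "CARD('t) \<ge> 2"
    and closed_K: "\<And>t j. closed (KK t j)"
    and E_sub: "\<And>t. E t \<subseteq> Ct KK t"
    and E_zero: "\<And>t. (\<lambda>v. 0) \<in> E t"
    and E_add: "\<And>t f g. f \<in> E t \<Longrightarrow> g \<in> E t \<Longrightarrow> (\<lambda>v. f v + g v) \<in> E t"
    and E_scale: "\<And>t f c. f \<in> E t \<Longrightarrow> (\<lambda>v. c * f v) \<in> E t"
    and E_const: "\<And>t f c. f \<in> E t \<Longrightarrow> (\<lambda>v. f v + c) \<in> E t"
    and D_pc: "\<And>t. proper_convex_on (caK KK t) (D t)"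
    and D_lsc: "\<And>t. lsc_on (weak_top (MK KK t) (caK KK t) (E t)) (D t)"
  shows "(\<forall>t. lsc_on (weak_top (MOm KK) (caOm KK) (testE E)) (\<lambda>\<gamma>. D t (marg KK t \<gamma>)))
       \<and> lsc_on (weak_top (MOm KK) (caOm KK) (testE E)) (Dtot KK D)
       \<and> ((\<forall>t. \<forall>\<gamma>\<in>caK KK t. D t \<gamma> < \<infinity> \<longrightarrow> is_prob (MK KK t) \<gamma>) \<longrightarrow>
          (\<forall>\<phi>. (\<forall>t. \<phi> t \<in> E t) \<longrightarrow>
             UU KK D \<phi> = (\<Sum>t\<in>UNIV. Ut KK D t (\<phi> t))
           \<and> (\<Sum>t\<in>UNIV. Ut KK D t (\<phi> t)) = (\<Sum>t\<in>UNIV. - Vt KK D t (\<lambda>v. - \<phi> t v))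
           \<and> SU KK D \<phi> = (\<Sum>t\<in>UNIV. SUt KK D t (\<phi> t))))"
proof -
  \<comment> \<open>Neither \<open>T \<ge> 1\<close>, nor the closedness of the \<open>K\<^sub>t\<^sup>j\<close>, nor convexity of the \<open>\<D>\<^sub>t\<close>, nor any
      closure property of \<open>\<E>\<^sub>t\<close> beyond \<open>\<E>\<^sub>t \<noteq> {}\<close> is needed.\<close>
  have E_nonempty: "E t \<noteq> {}" for t
    using E_zero by blast
  have D_neq_MInfty: "D t \<xi> \<noteq> -\<infinity>" if "\<xi> \<in> caK KK t" for t \<xi>
    using D_pc that unfolding proper_convex_on_def by blast
  have "lsc_on (weak_top (MOm KK) (caOm KK) (testE E)) (\<lambda>\<gamma>. D t (marg KK t \<gamma>))" for t
    using E_sub E_nonempty D_lsc by (rule lsc_on_marg)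
  moreover have "lsc_on (weak_top (MOm KK) (caOm KK) (testE E)) (Dtot KK D)"
    using E_sub E_nonempty D_lsc D_neq_MInfty by (rule lsc_on_Dtot)
  moreover have "UU KK D \<phi> = (\<Sum>t\<in>UNIV. Ut KK D t (\<phi> t))
      \<and> (\<Sum>t\<in>UNIV. Ut KK D t (\<phi> t)) = (\<Sum>t\<in>UNIV. - Vt KK D t (\<lambda>v. - \<phi> t v))
      \<and> SU KK D \<phi> = (\<Sum>t\<in>UNIV. SUt KK D t (\<phi> t))"
    if dom: "\<forall>t. \<forall>\<gamma>\<in>caK KK t. D t \<gamma> < \<infinity> \<longrightarrow> is_prob (MK KK t) \<gamma>"
      and \<phi>: "\<forall>t. \<phi> t \<in> E t" for \<phi>
  proof -
    interpret prob_penalties KK D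
      using D_pc dom unfolding proper_convex_on_def by unfold_locales blast+
    have "\<And>t. \<phi> t \<in> Ct KK t"
      using \<phi> E_sub by blast
    then show ?thesis
      using UU_eq_sum_Ut SU_eq_sum_SUt by (simp add: Ut_def)
  qed
  ultimately show ?thesis
    by blast
qed

end
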